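(* Suppose Assumption 1 holds with $\alpha\in(0,1]$ and let $(f_t)_{t\in\mathbb N}$ be the online gradient descent iterates. Define $$a=2^\alpha L^{1+\frac1\alpha}\kappa^{2(1+\alpha)},\qquad b=\frac{2^\alpha L\kappa^{2(1+\alpha)}}{1+\alpha}\Big[(1-\alpha)+\mathbb E_{(x,y)\sim\rho}\big[|\phi'(y,f_H(x))|^{1+\alpha}\big]\Big].$$ Then for every $t\in\mathbb N$, $$\mathbb E_{z_t}[\mathcal E(f_{t+1})]-\mathcal E(f_H)\le\big(1+a\eta_t^{1+\alpha}\big)\big(\mathcal E(f_t)-\mathcal E(f_H)\big)-\eta_t\|\nabla\mathcal E(f_t)\|^2+b\,\eta_t^{1+\alpha}.$$
   Context: Setting: Let $\mathcal X\subset\mathbb R^d$, $\mathcal Y\subset\mathbb R$, $\mathcal Z=\mathcal X\times\mathcal Y$, and let $\rho$ be a Borel probability measure on $\mathcal Z$. Let $K:\mathcal X\times\mathcal X\to\mathbb R$ be a continuous, symmetric, positive semi-definite kernel with reproducing kernel Hilbert space $H_K$ (inner product $\langle\cdot,\cdot\rangle$, norm $\|\cdot\|$), $K_x:=K(x,\cdot)$, reproducing property $f(x)=\langle f,K_x\rangle$, and $\kappa:=\sup_{x\in\mathcal X}\sqrt{K(x,x)}<\infty$. Let $\phi:\mathcal Y\times\mathbb R\to[0,\infty)$ be a loss function, differentiable in its second argument, and write $\phi'(y,s)$ for its derivative with respect to $s$. The generalization error of $f:\mathcal X\to\mathbb R$ is $\mathcal E(f)=\int_{\mathcal Z}\phi(y,f(x))\,d\rho(x,y)$.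 It is assumed that a minimizer $f_H\in\arg\min_{f\in H_K}\mathcal E(f)$ exists and that $\max\{\sup_{y\in\mathcal Y}\phi(y,0),\ \sup_{(x,y)\in\mathcal Z}\phi(y,f_H(x))\}<\infty$. Let $z_t=(x_t,y_t)$, $t\in\mathbb N$, be i.i.d. samples from $\rho$, let $(\eta_t)_{t\in\mathbb N}$ be positive step sizes, and define the online gradient descent iterates by $f_1=0$ and $f_{t+1}=f_t-\eta_t\phi'(y_t,f_t(x_t))K_{x_t}$ for $t\in\mathbb N$ (so $f_t$ depends only on $z_1,\dots,z_{t-1}$). Assumption 1: for every $y\in\mathcal Y$, $\phi(y,\cdot)$ is convex and differentiable, and there are constants $\alpha\in(0,1]$, $L>0$ with $|\phi'(y,s)-\phi'(y,\tilde s)|\le L|s-\tilde s|^{\alpha}$ for all $s,\tilde s\in\mathbb R$, $y\in\mathcal Y$. $\nabla\mathcal E(f)=\mathbb E_{(x,y)\sim\rho}[\phi'(y,f(x))K_x]\in H_K$ denotes the gradient of $\mathcal E$ at $f\in H_K$. $\mathbb E_{z_t}[\cdot]$ denotes the conditional expectation with respect to $z_t$ given $z_1,\dots,z_{t-1}$. *)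

theory Defs
  imports "HOL-Analysis.Analysis" "HOL-Probability.Probability"
begin

text \<open>Elements of the Hilbert space 'h represent functions in H_K via
  the evaluation  f(x) = f \<bullet> Kx x  (reproducing property).\<close>

definition eval_h :: "'h::real_inner \<Rightarrow> ('x \<Rightarrow> 'h) \<Rightarrow> 'x \<Rightarrow> real" where
  "eval_h f Kx x = f \<bullet> Kx x"

definition gen_err ::
  "('x \<times> real) measure \<Rightarrow> (real \<Rightarrow> real \<Rightarrow> real) \<Rightarrow> ('x \<Rightarrow> 'h::real_inner) \<Rightarrow> 'h \<Rightarrow> real" where
  "gen_err \<rho> \<phi> Kx f = (\<integral>z. \<phi> (snd z) (eval_h f Kx (fst z)) \<partial>\<rho>)"

definition grad_err ::
  "('x \<times> real) measure \<Rightarrow> (real \<Rightarrow> real \<Rightarrow> real) \<Rightarrow> ('x \<Rightarrow> 'h::{real_inner,banach,second_countable_topology}) \<Rightarrow> 'h \<Rightarrow> 'h" where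
  "grad_err \<rho> dphi Kx f = (\<integral>z. dphi (snd z) (eval_h f Kx (fst z)) *\<^sub>R Kx (fst z) \<partial>\<rho>)"

text \<open>Online gradient descent iterates, indexed from 1:
  ogd .. z 1 = 0 and ogd .. z (t+1) = f_t - eta_t phi'(y_t, f_t(x_t)) K_{x_t} for t >= 1,
  where z t = (x_t, y_t) is the t-th sample.  The value at index 0 is a junk value 0.\<close>
primrec ogd ::
  "(nat \<Rightarrow> real) \<Rightarrow> (real \<Rightarrow> real \<Rightarrow> real) \<Rightarrow> ('x \<Rightarrow> 'h::real_inner) \<Rightarrow> (nat \<Rightarrow> 'x \<times> real) \<Rightarrow> nat \<Rightarrow> 'h" where
  "ogd \<eta> dphi Kx z 0 = 0"
| "ogd \<eta> dphi Kx z (Suc t) =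
     (if t = 0 then 0
      else ogd \<eta> dphi Kx z t
           - (\<eta> t * dphi (snd (z t)) (eval_h (ogd \<eta> dphi Kx z t) Kx (fst (z t)))) *\<^sub>R Kx (fst (z t)))"

definition kappa :: "'x set \<Rightarrow> ('x \<Rightarrow> 'x \<Rightarrow> real) \<Rightarrow> real" where
  "kappa X K = (SUP x\<in>X. sqrt (K x x))"

end

theory Submission
  imports Defs
begin

text \<open>Along each feature direction the loss inherits the \<alpha>-Hoelder descent inequality, and
  \<bar>f(x)\<bar> \<le> \<kappa> \<parallel>f\<parallel> turns it into a descent inequality for the risk on H_K with remainder
  L/(1+\<alpha>) (\<kappa> \<parallel>g\<parallel>)^(1+\<alpha>). Applied to the stochastic step and averaged over the fresh sample,
  it gives E(f_t) - \<eta>_t \<parallel>\<nabla>E(f_t)\<parallel>^2 plus a multiple of \<eta>_t^(1+\<alpha>) times the (1+\<alpha>)-th moment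
  of \<phi>'(y, f_t(x)). That moment is controlled by co-coercivity of Hoelder gradients of convex
  functions: \<bar>\<phi>'(s) - \<phi>'(r)\<bar>^((1+\<alpha>)/\<alpha>) is at most a multiple of the Bregman gap, which
  integrates to E(f_t) - E(f_H) because \<nabla>E(f_H) = 0; Young's inequality brings the exponent
  (1+\<alpha>)/\<alpha> back down to 1+\<alpha> at the price of the constant 1-\<alpha>.\<close>

lemma holder_descent:
  fixes f f' :: "real \<Rightarrow> real"
  assumes deriv: "\<And>s. (f has_real_derivative f' s) (at s)"
    and holder: "\<And>s s'. \<bar>f' s - f' s'\<bar> \<le> L * \<bar>s - s'\<bar> powr \<alpha>"
    and "0 < \<alpha>"
  shows "f s' \<le> f s + f' s * (s' - s) + L / (1 + \<alpha>) * \<bar>s' - s\<bar> powr (1 + \<alpha>)"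
proof -
  define d where "d = s' - s"
  define C where "C = L / (1 + \<alpha>) * \<bar>d\<bar> powr (1 + \<alpha>)"
  define h where "h = (\<lambda>\<tau>. f (s + \<tau> * d) - \<tau> * (f' s * d) - C * \<tau> powr (1 + \<alpha>))"
  have "h 1 \<le> h 0"
  proof (rule DERIV_nonpos_imp_decreasing_open[of 0 1 h])
    fix \<tau> :: real assume \<tau>: "0 < \<tau>" "\<tau> < 1"
    have "(h has_real_derivative f' (s + \<tau> * d) * d - f' s * d - C * ((1 + \<alpha>) * \<tau> powr \<alpha>)) (at \<tau>)"
      unfolding h_def using \<tau>
      by (auto intro!: derivative_eq_intros DERIV_chain2[OF deriv] simp: powr_diff)
    moreover have "(f' (s + \<tau> * d) - f' s) * d \<le> C * ((1 + \<alpha>) * \<tau> powr \<alpha>)"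
    proof -
      have "(f' (s + \<tau> * d) - f' s) * d \<le> \<bar>f' (s + \<tau> * d) - f' s\<bar> * \<bar>d\<bar>"
        by (metis abs_ge_self abs_mult)
      also have "\<dots> \<le> L * \<bar>\<tau> * d\<bar> powr \<alpha> * \<bar>d\<bar>"
        using holder[of "s + \<tau> * d" s] by (intro mult_right_mono) auto
      also have "\<dots> = L * \<tau> powr \<alpha> * (\<bar>d\<bar> * \<bar>d\<bar> powr \<alpha>)"
        using \<tau> by (simp add: abs_mult powr_mult)
      also have "\<bar>d\<bar> * \<bar>d\<bar> powr \<alpha> = \<bar>d\<bar> powr (1 + \<alpha>)"
        by (rule powr_mult_base) simp
      finally show ?thesis
        using \<open>0 < \<alpha>\<close> by (simp add: C_def mult_ac)
    qed
    ultimately show "\<exists>y. (h has_real_derivative y) (at \<tau>) \<and> y \<le> 0"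
      by (intro exI conjI) (auto simp: algebra_simps)
  next
    have "continuous_on UNIV f"
      using deriv DERIV_isCont continuous_at_imp_continuous_on by blast
    then have "continuous_on {0..1} (\<lambda>\<tau>. f (s + \<tau> * d))"
      by (rule continuous_on_compose2) (auto intro!: continuous_intros)
    moreover have "continuous_on {0..1} (\<lambda>\<tau>::real. \<tau> * (f' s * d))"
      by (intro continuous_intros)
    moreover have "continuous_on {0..1} (\<lambda>\<tau>::real. C * \<tau> powr (1 + \<alpha>))"
      using \<open>0 < \<alpha>\<close>
      by (intro continuous_on_mult continuous_on_const continuous_on_powr' continuous_intros) auto
    ultimately show "continuous_on {0..1} h"
      unfolding h_def by (intro continuous_on_diff)
  qed simp
  then show ?thesis
    by (simp add: h_def C_def d_def)
qed

lemma Young_powr_one_plus: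
  fixes v \<alpha> :: real
  assumes "0 < \<alpha>" "\<alpha> \<le> 1" "0 \<le> v"
  shows "v powr (1 + \<alpha>) \<le> \<alpha> * v powr ((1 + \<alpha>) / \<alpha>) + (1 - \<alpha>)"
proof (cases "v = 0")
  case False
  have "(v powr ((1 + \<alpha>) / \<alpha>)) powr \<alpha> * 1 powr (1 - \<alpha>) \<le> \<alpha> * v powr ((1 + \<alpha>) / \<alpha>) + (1 - \<alpha>) * 1"
    using False assms by (intro Youngs_inequality_0) auto
  then show ?thesis
    using assms by (simp add: powr_powr)
qed (use assms in simp)

lemma powr_add_le_two_powr:
  fixes a b p :: real
  assumes "0 \<le> a" "0 \<le> b" "1 \<le> p"
  shows "(a + b) powr p \<le> 2 powr (p - 1) * (a powr p + b powr p)"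
proof (cases "a = 0 \<or> b = 0")
  case True
  then have "(a + b) powr p = 1 * (a powr p + b powr p)" by auto
  also have "\<dots> \<le> 2 powr (p - 1) * (a powr p + b powr p)"
    using assms by (intro mult_right_mono ge_one_powr_ge_zero) auto
  finally show ?thesis .
next
  case False
  then have "((1 - 1/2) *\<^sub>R a + (1/2) *\<^sub>R b) powr p \<le> (1 - 1/2) * a powr p + (1/2) * b powr p"
    using convex_onD[OF powr_convex[OF assms(3)], of "1/2" a b] assms by auto
  then have "2 powr p * ((a + b) / 2) powr p \<le> 2 powr p * ((a powr p + b powr p) / 2)"
    by (intro mult_left_mono) (auto simp: field_simps)
  then show ?thesis
    using assms by (simp add: powr_divide powr_diff)
qed

lemma holder_gradient_cocoercive:
  fixes f f' :: "real \<Rightarrow> real"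
  assumes deriv: "\<And>s. (f has_real_derivative f' s) (at s)"
    and holder: "\<And>s s'. \<bar>f' s - f' s'\<bar> \<le> L * \<bar>s - s'\<bar> powr \<alpha>"
    and convex: "convex_on UNIV f"
    and "0 < \<alpha>" "0 < L"
  shows "\<bar>f' s - f' r\<bar> powr ((1 + \<alpha>) / \<alpha>) \<le> (1 + \<alpha>) / \<alpha> * L powr (1 / \<alpha>) * (f s - f r - f' r * (s - r))"
proof -
  have tangent: "f u + f' u * (v - u) \<le> f v" for u v
    using convex_on_imp_above_tangent[OF convex, of u v "f' u"] deriv[of u] by auto
  define g where "g = f' s - f' r"
  define \<delta> where "\<delta> = (\<bar>g\<bar> / L) powr (1 / \<alpha>)"
  define u where "u = s - \<delta> * sgn g"
  show ?thesis
  proof (cases "g = 0")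
    case True
    then show ?thesis
      using tangent[of r s] \<open>0 < \<alpha>\<close> \<open>0 < L\<close> by (simp add: g_def)
  next
    case False
    have "\<delta> \<ge> 0" by (simp add: \<delta>_def)
    \<comment> \<open>Compare the tangent of f at r with the Hoelder upper bound around s, at the point u
      obtained from s by a step of optimal length \<delta> against the sign of g.\<close>
    have "f r + f' r * (u - r) \<le> f s + f' s * (u - s) + L / (1 + \<alpha>) * \<bar>u - s\<bar> powr (1 + \<alpha>)"
      using tangent[of r u] holder_descent[OF deriv holder \<open>0 < \<alpha>\<close>, where s = s and s' = u] by linarith
    moreover have "- g * (u - s) = \<bar>g\<bar> * \<delta>" "\<bar>u - s\<bar> = \<delta>"
      using False \<open>\<delta> \<ge> 0\<close> by (auto simp: u_def abs_mult abs_sgn_eq sgn_if)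
    ultimately have lower: "\<bar>g\<bar> * \<delta> - L / (1 + \<alpha>) * \<delta> powr (1 + \<alpha>) \<le> f s - f r - f' r * (s - r)"
      by (simp add: g_def algebra_simps)
    have "\<delta> powr \<alpha> = \<bar>g\<bar> / L"
      using \<open>0 < \<alpha>\<close> \<open>0 < L\<close> by (simp add: \<delta>_def powr_powr)
    then have "L * \<delta> powr (1 + \<alpha>) = \<bar>g\<bar> * \<delta>"
      using \<open>\<delta> \<ge> 0\<close> \<open>0 < L\<close> by (simp add: powr_add)
    then have "\<bar>g\<bar> * \<delta> - L / (1 + \<alpha>) * \<delta> powr (1 + \<alpha>) = \<alpha> / (1 + \<alpha>) * (\<bar>g\<bar> * \<delta>)"
      using \<open>0 < \<alpha>\<close> by (simp add: field_simps)
    with lower have gap: "\<alpha> / (1 + \<alpha>) * (\<bar>g\<bar> * \<delta>) \<le> f s - f r - f' r * (s - r)"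
      by simp
    have "(1 + \<alpha>) / \<alpha> = 1 + 1 / \<alpha>"
      using \<open>0 < \<alpha>\<close> by (simp add: field_simps)
    then have "\<bar>g\<bar> powr ((1 + \<alpha>) / \<alpha>) = L powr (1 / \<alpha>) * (\<bar>g\<bar> * \<delta>)"
      using \<open>0 < L\<close> by (simp add: \<delta>_def powr_add powr_divide)
    also have "\<dots> = (1 + \<alpha>) / \<alpha> * L powr (1 / \<alpha>) * (\<alpha> / (1 + \<alpha>) * (\<bar>g\<bar> * \<delta>))"
      using \<open>0 < \<alpha>\<close> by simp
    also have "\<dots> \<le> (1 + \<alpha>) / \<alpha> * L powr (1 / \<alpha>) * (f s - f r - f' r * (s - r))"
      using gap \<open>0 < \<alpha>\<close> by (intro mult_left_mono) auto
    finally show ?thesis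
      by (simp add: g_def)
  qed
qed

lemma holder_derivative_powr_bound:
  fixes f f' :: "real \<Rightarrow> real"
  assumes deriv: "\<And>s. (f has_real_derivative f' s) (at s)"
    and holder: "\<And>s s'. \<bar>f' s - f' s'\<bar> \<le> L * \<bar>s - s'\<bar> powr \<alpha>"
    and convex: "convex_on UNIV f"
    and "0 < \<alpha>" "\<alpha> \<le> 1" "0 < L"
  shows "\<bar>f' s\<bar> powr (1 + \<alpha>)
    \<le> 2 powr \<alpha> * ((1 + \<alpha>) * L powr (1 / \<alpha>) * (f s - f r - f' r * (s - r)) + (1 - \<alpha>) + \<bar>f' r\<bar> powr (1 + \<alpha>))"
proof -
  define g where "g = \<bar>f' s - f' r\<bar>"
  have "\<bar>f' s\<bar> powr (1 + \<alpha>) \<le> (g + \<bar>f' r\<bar>) powr (1 + \<alpha>)"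
    using \<open>0 < \<alpha>\<close> by (intro powr_mono2) (auto simp: g_def)
  also have "\<dots> \<le> 2 powr \<alpha> * (g powr (1 + \<alpha>) + \<bar>f' r\<bar> powr (1 + \<alpha>))"
    using powr_add_le_two_powr[of g "\<bar>f' r\<bar>" "1 + \<alpha>"] \<open>0 < \<alpha>\<close> by (simp add: g_def)
  also have "g powr (1 + \<alpha>) \<le> \<alpha> * g powr ((1 + \<alpha>) / \<alpha>) + (1 - \<alpha>)"
    using assms by (intro Young_powr_one_plus) (auto simp: g_def)
  also have "\<alpha> * g powr ((1 + \<alpha>) / \<alpha>) \<le> (1 + \<alpha>) * L powr (1 / \<alpha>) * (f s - f r - f' r * (s - r))"
    using mult_left_mono[OF holder_gradient_cocoercive[OF deriv holder convex \<open>0 < \<alpha>\<close> \<open>0 < L\<close>, of s r], of \<alpha>]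
      \<open>0 < \<alpha>\<close> by (simp add: g_def)
  finally show ?thesis
    by simp
qed

lemma borel_measurable_derivative_restrict:
  fixes \<phi> dphi :: "'y::topological_space \<Rightarrow> real \<Rightarrow> real"
  assumes meas: "(\<lambda>p. \<phi> (fst p) (snd p)) \<in> borel_measurable (restrict_space borel (Y \<times> UNIV))"
    and deriv: "\<And>y s. y \<in> Y \<Longrightarrow> (\<phi> y has_real_derivative dphi y s) (at s)"
  shows "(\<lambda>p. dphi (fst p) (snd p)) \<in> borel_measurable (restrict_space borel (Y \<times> UNIV))"
proof (rule borel_measurable_LIMSEQ_real)
  define q where "q = (\<lambda>i (p :: 'y \<times> real). (\<phi> (fst p) (snd p + inverse (Suc i)) - \<phi> (fst p) (snd p)) / inverse (Suc i))"
  fix p assume "p \<in> space (restrict_space borel (Y \<times> (UNIV :: real set)))"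
  then have "((\<lambda>h. (\<phi> (fst p) (snd p + h) - \<phi> (fst p) (snd p)) / h) \<longlongrightarrow> dphi (fst p) (snd p)) (at 0)"
    using deriv unfolding DERIV_def by (auto simp: space_restrict_space)
  moreover have "filterlim (\<lambda>i. inverse (real (Suc i))) (at 0) sequentially"
    unfolding filterlim_at using LIMSEQ_inverse_real_of_nat by auto
  ultimately show "(\<lambda>i. q i p) \<longlonglongrightarrow> dphi (fst p) (snd p)"
    unfolding q_def by (rule filterlim_compose)
next
  fix i
  define c where "c = inverse (real (Suc i))"
  have "(\<lambda>p. (fst p, snd p + c)) \<in> measurable (restrict_space borel (Y \<times> UNIV)) (restrict_space borel (Y \<times> UNIV))"
    by (intro measurable_restrict_space3 borel_measurable_continuous_onI) (auto intro!: continuous_intros)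
  from measurable_compose[OF this meas]
  have "(\<lambda>p. \<phi> (fst p) (snd p + c)) \<in> borel_measurable (restrict_space borel (Y \<times> UNIV))"
    by simp
  then show "(\<lambda>p. (\<phi> (fst p) (snd p + inverse (Suc i)) - \<phi> (fst p) (snd p)) / inverse (Suc i))
      \<in> borel_measurable (restrict_space borel (Y \<times> UNIV))"
    using meas unfolding c_def by measurable
qed

locale holder_loss_rkhs = prob_space \<rho>
  for \<rho> :: "('x::{metric_space, second_countable_topology} \<times> real) measure" +
  fixes X :: "'x set" and Y :: "real set"
    and K :: "'x \<Rightarrow> 'x \<Rightarrow> real"
    and Kx :: "'x \<Rightarrow> 'h::{real_inner, banach, second_countable_topology}"
    and \<phi> dphi :: "real \<Rightarrow> real \<Rightarrow> real"
    and \<alpha> L :: real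
  assumes space_rho: "space \<rho> = X \<times> Y"
    and sets_rho: "sets \<rho> = sets (restrict_space borel (X \<times> Y))"
    and K_feat: "\<forall>x\<in>X. \<forall>x'\<in>X. K x x' = Kx x \<bullet> Kx x'"
    and K_cont: "continuous_on (X \<times> X) (\<lambda>p. K (fst p) (snd p))"
    and K_bdd: "bdd_above ((\<lambda>x. sqrt (K x x)) ` X)"
    and phi_nonneg: "\<forall>y\<in>Y. \<forall>s. 0 \<le> \<phi> y s"
    and phi_meas: "(\<lambda>p. \<phi> (fst p) (snd p)) \<in> borel_measurable (restrict_space borel (Y \<times> UNIV))"
    and phi_convex: "\<forall>y\<in>Y. convex_on UNIV (\<phi> y)"
    and phi_deriv: "\<forall>y\<in>Y. \<forall>s. (\<phi> y has_real_derivative dphi y s) (at s)"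
    and alpha: "0 < \<alpha>" "\<alpha> \<le> 1"
    and L_pos: "0 < L"
    and holder: "\<forall>y\<in>Y. \<forall>s s'. \<bar>dphi y s - dphi y s'\<bar> \<le> L * \<bar>s - s'\<bar> powr \<alpha>"
    and bdd0: "bdd_above ((\<lambda>y. \<phi> y 0) ` Y)"
begin

abbreviation "\<kappa> \<equiv> kappa X K"
abbreviation "risk \<equiv> gen_err \<rho> \<phi> Kx"
abbreviation "risk_grad \<equiv> grad_err \<rho> dphi Kx"

lemma fst_in_X: "p \<in> space \<rho> \<Longrightarrow> fst p \<in> X" and snd_in_Y: "p \<in> space \<rho> \<Longrightarrow> snd p \<in> Y"
  using space_rho by (auto simp: mem_Times_iff)

lemma norm_Kx_le: "x \<in> X \<Longrightarrow> norm (Kx x) \<le> \<kappa>"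
  using K_feat cSUP_upper[OF _ K_bdd] by (simp add: norm_eq_sqrt_inner kappa_def)

lemma kappa_nonneg: "0 \<le> \<kappa>"
proof -
  obtain p where "p \<in> space \<rho>"
    using not_empty by blast
  then show ?thesis
    using norm_Kx_le[OF fst_in_X] norm_ge_zero order_trans by blast
qed

lemma abs_inner_Kx_le: "x \<in> X \<Longrightarrow> \<bar>f \<bullet> Kx x\<bar> \<le> norm f * \<kappa>"
  using Cauchy_Schwarz_ineq2[of f "Kx x"] mult_left_mono[OF norm_Kx_le, of x "norm f"] by simp

lemma continuous_on_Kx: "continuous_on X Kx"
  unfolding continuous_on_iff
proof (intro ballI allI impI)
  fix x0 and e :: real assume x0: "x0 \<in> X" and "0 < e"
  \<comment> \<open>g x is the squared feature distance \<parallel>Kx x - Kx x0\<parallel>^2.\<close>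
  define g where "g = (\<lambda>x. K x x - 2 * K x x0 + K x0 x0)"
  have "continuous_on X g"
    unfolding g_def
    by (intro continuous_intros continuous_on_compose2[OF K_cont, of X "\<lambda>x. (x, x)", simplified]
        continuous_on_compose2[OF K_cont, of X "\<lambda>x. (x, x0)", simplified]) (auto simp: x0)
  then obtain d where "d > 0" and d: "\<And>x. x \<in> X \<Longrightarrow> dist x x0 < d \<Longrightarrow> dist (g x) (g x0) < e\<^sup>2"
    using x0 \<open>0 < e\<close> unfolding continuous_on_iff by (meson zero_less_power)
  have "dist (Kx x) (Kx x0) < e" if "x \<in> X" "dist x x0 < d" for x
  proof -
    have "(dist (Kx x) (Kx x0))\<^sup>2 = g x"
      using that x0 K_feat
      by (simp add: dist_norm power2_norm_eq_inner g_def inner_diff_left inner_diff_right inner_commute)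
    also have "\<dots> < e\<^sup>2"
      using d[OF that] by (simp add: g_def dist_real_def)
    finally show ?thesis
      using \<open>0 < e\<close> by (simp add: power_less_imp_less_base)
  qed
  with \<open>d > 0\<close> show "\<exists>d>0. \<forall>x\<in>X. dist x x0 < d \<longrightarrow> dist (Kx x) (Kx x0) < e"
    by blast
qed

lemma borel_measurable_continuous_on_XY: "continuous_on (X \<times> Y) g \<Longrightarrow> g \<in> borel_measurable \<rho>"
  unfolding measurable_cong_sets[OF sets_rho refl] by (rule borel_measurable_continuous_on_restrict)

lemma Kx_measurable: "(\<lambda>p. Kx (fst p)) \<in> borel_measurable \<rho>"
  by (intro borel_measurable_continuous_on_XY continuous_on_compose2[OF continuous_on_Kx]
      continuous_intros) auto

lemma inner_Kx_measurable: "(\<lambda>p. f \<bullet> Kx (fst p)) \<in> borel_measurable \<rho>"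
  using Kx_measurable by measurable

lemma loss_comp_measurable:
  assumes "r \<in> borel_measurable \<rho>"
  shows "(\<lambda>p. \<phi> (snd p) (r p)) \<in> borel_measurable \<rho>"
    and "(\<lambda>p. dphi (snd p) (r p)) \<in> borel_measurable \<rho>"
proof -
  have "snd \<in> borel_measurable \<rho>"
    by (intro borel_measurable_continuous_on_XY continuous_intros)
  then have "(\<lambda>p. (snd p, r p)) \<in> borel_measurable \<rho>"
    using assms by (simp add: borel_prod[symmetric])
  then have pair: "(\<lambda>p. (snd p, r p)) \<in> measurable \<rho> (restrict_space borel (Y \<times> UNIV))"
    using snd_in_Y by (intro measurable_restrict_space2) auto
  show "(\<lambda>p. \<phi> (snd p) (r p)) \<in> borel_measurable \<rho>"
    using measurable_compose[OF pair phi_meas] by simp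
  show "(\<lambda>p. dphi (snd p) (r p)) \<in> borel_measurable \<rho>"
    using measurable_compose[OF pair borel_measurable_derivative_restrict[OF phi_meas]] phi_deriv
    by simp
qed

definition sup_loss_0 :: real where
  "sup_loss_0 = (SUP y\<in>Y. \<phi> y 0)"

lemma
  assumes "y \<in> Y"
  shows loss_descent: "\<phi> y s' \<le> \<phi> y s + dphi y s * (s' - s) + L / (1 + \<alpha>) * \<bar>s' - s\<bar> powr (1 + \<alpha>)"
    and dphi_powr_bound: "\<bar>dphi y s\<bar> powr (1 + \<alpha>)
      \<le> 2 powr \<alpha> * ((1 + \<alpha>) * L powr (1 / \<alpha>) * (\<phi> y s - \<phi> y r - dphi y r * (s - r)) + (1 - \<alpha>) + \<bar>dphi y r\<bar> powr (1 + \<alpha>))"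
proof -
  have deriv: "\<And>s. (\<phi> y has_real_derivative dphi y s) (at s)"
    and hold: "\<And>s s'. \<bar>dphi y s - dphi y s'\<bar> \<le> L * \<bar>s - s'\<bar> powr \<alpha>"
    using assms phi_deriv holder by auto
  show "\<phi> y s' \<le> \<phi> y s + dphi y s * (s' - s) + L / (1 + \<alpha>) * \<bar>s' - s\<bar> powr (1 + \<alpha>)"
    using holder_descent[OF deriv hold alpha(1)] .
  show "\<bar>dphi y s\<bar> powr (1 + \<alpha>)
      \<le> 2 powr \<alpha> * ((1 + \<alpha>) * L powr (1 / \<alpha>) * (\<phi> y s - \<phi> y r - dphi y r * (s - r)) + (1 - \<alpha>) + \<bar>dphi y r\<bar> powr (1 + \<alpha>))"
    using holder_derivative_powr_bound[OF deriv hold _ alpha L_pos] phi_convex assms by blast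
qed

lemma abs_dphi_le:
  assumes "y \<in> Y" "\<bar>s\<bar> \<le> R"
  shows "\<bar>dphi y s\<bar> \<le> sup_loss_0 + L / (1 + \<alpha>) + L * R powr \<alpha>"
proof -
  \<comment> \<open>A large derivative at 0 would make \<phi> y negative at -1 or at 1.\<close>
  have "0 \<le> \<phi> y 1" "0 \<le> \<phi> y (-1)"
    using phi_nonneg \<open>y \<in> Y\<close> by auto
  then have "\<bar>dphi y 0\<bar> \<le> \<phi> y 0 + L / (1 + \<alpha>)"
    using loss_descent[OF \<open>y \<in> Y\<close>, of 1 0] loss_descent[OF \<open>y \<in> Y\<close>, of "-1" 0]
    by (auto simp: abs_le_iff)
  moreover have "\<phi> y 0 \<le> sup_loss_0"
    unfolding sup_loss_0_def using \<open>y \<in> Y\<close> by (rule cSUP_upper[OF _ bdd0])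
  moreover have "\<bar>dphi y s - dphi y 0\<bar> \<le> L * R powr \<alpha>"
  proof -
    have "\<bar>dphi y s - dphi y 0\<bar> \<le> L * \<bar>s - 0\<bar> powr \<alpha>"
      using holder \<open>y \<in> Y\<close> by blast
    also have "\<dots> \<le> L * R powr \<alpha>"
      using \<open>\<bar>s\<bar> \<le> R\<close> alpha L_pos by (intro mult_left_mono powr_mono2) auto
    finally show ?thesis .
  qed
  ultimately show ?thesis
    by linarith
qed

lemma loss_le:
  assumes "y \<in> Y" "\<bar>s\<bar> \<le> R"
  shows "\<phi> y s \<le> sup_loss_0 + (sup_loss_0 + L / (1 + \<alpha>)) * R + L / (1 + \<alpha>) * R powr (1 + \<alpha>)"
proof -
  have "\<phi> y 0 \<le> sup_loss_0"
    unfolding sup_loss_0_def using \<open>y \<in> Y\<close> by (rule cSUP_upper[OF _ bdd0])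
  moreover have "dphi y 0 * s \<le> (sup_loss_0 + L / (1 + \<alpha>)) * R"
  proof -
    have "dphi y 0 * s \<le> \<bar>dphi y 0\<bar> * \<bar>s\<bar>"
      by (simp add: abs_mult[symmetric])
    also have "\<dots> \<le> (sup_loss_0 + L / (1 + \<alpha>)) * R"
      using abs_dphi_le[OF \<open>y \<in> Y\<close>, of 0 0] alpha \<open>\<bar>s\<bar> \<le> R\<close> by (intro mult_mono) auto
    finally show ?thesis .
  qed
  moreover have "L / (1 + \<alpha>) * \<bar>s\<bar> powr (1 + \<alpha>) \<le> L / (1 + \<alpha>) * R powr (1 + \<alpha>)"
    using \<open>\<bar>s\<bar> \<le> R\<close> alpha L_pos by (intro mult_left_mono powr_mono2) auto
  ultimately show ?thesis
    using loss_descent[OF \<open>y \<in> Y\<close>, of s 0] by simp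
qed

lemma abs_dphi_inner_Kx_le:
  "p \<in> space \<rho> \<Longrightarrow> \<bar>dphi (snd p) (f \<bullet> Kx (fst p))\<bar> \<le> sup_loss_0 + L / (1 + \<alpha>) + L * (norm f * \<kappa>) powr \<alpha>"
  by (rule abs_dphi_le[OF snd_in_Y abs_inner_Kx_le[OF fst_in_X]])

lemma integrable_loss: "integrable \<rho> (\<lambda>p. \<phi> (snd p) (f \<bullet> Kx (fst p)))"
proof (rule integrable_const_bound)
  show "AE p in \<rho>. norm (\<phi> (snd p) (f \<bullet> Kx (fst p)))
      \<le> sup_loss_0 + (sup_loss_0 + L / (1 + \<alpha>)) * (norm f * \<kappa>) + L / (1 + \<alpha>) * (norm f * \<kappa>) powr (1 + \<alpha>)"
    using loss_le[OF snd_in_Y abs_inner_Kx_le[OF fst_in_X]] phi_nonneg snd_in_Y by auto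
qed (intro loss_comp_measurable inner_Kx_measurable)

lemma integrable_dphi_Kx: "integrable \<rho> (\<lambda>p. dphi (snd p) (f \<bullet> Kx (fst p)) *\<^sub>R Kx (fst p))"
proof (rule integrable_const_bound)
  have "norm (dphi (snd p) (f \<bullet> Kx (fst p)) *\<^sub>R Kx (fst p)) \<le> (sup_loss_0 + L / (1 + \<alpha>) + L * (norm f * \<kappa>) powr \<alpha>) * \<kappa>"
    if "p \<in> space \<rho>" for p
    using abs_dphi_inner_Kx_le[OF that] norm_Kx_le[OF fst_in_X[OF that]]
    by (simp add: mult_mono' order_trans[OF abs_ge_zero])
  then show "AE p in \<rho>. norm (dphi (snd p) (f \<bullet> Kx (fst p)) *\<^sub>R Kx (fst p))
      \<le> (sup_loss_0 + L / (1 + \<alpha>) + L * (norm f * \<kappa>) powr \<alpha>) * \<kappa>"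
    by blast
qed (intro borel_measurable_scaleR loss_comp_measurable inner_Kx_measurable Kx_measurable)

lemma integrable_abs_dphi_powr: "integrable \<rho> (\<lambda>p. \<bar>dphi (snd p) (f \<bullet> Kx (fst p))\<bar> powr (1 + \<alpha>))"
proof (rule integrable_const_bound)
  have "\<bar>dphi (snd p) (f \<bullet> Kx (fst p))\<bar> powr (1 + \<alpha>)
      \<le> (sup_loss_0 + L / (1 + \<alpha>) + L * (norm f * \<kappa>) powr \<alpha>) powr (1 + \<alpha>)" if "p \<in> space \<rho>" for p
    using abs_dphi_inner_Kx_le[OF that] alpha by (intro powr_mono2) auto
  then show "AE p in \<rho>. norm (\<bar>dphi (snd p) (f \<bullet> Kx (fst p))\<bar> powr (1 + \<alpha>))
      \<le> (sup_loss_0 + L / (1 + \<alpha>) + L * (norm f * \<kappa>) powr \<alpha>) powr (1 + \<alpha>)"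
    by auto
  show "(\<lambda>p. \<bar>dphi (snd p) (f \<bullet> Kx (fst p))\<bar> powr (1 + \<alpha>)) \<in> borel_measurable \<rho>"
    using loss_comp_measurable(2)[OF inner_Kx_measurable] by measurable
qed

lemma risk_eq: "risk f = (\<integral>p. \<phi> (snd p) (f \<bullet> Kx (fst p)) \<partial>\<rho>)"
  by (simp add: gen_err_def eval_h_def)

lemma risk_nonneg: "0 \<le> risk f"
  unfolding risk_eq using phi_nonneg snd_in_Y by (auto intro: integral_nonneg_AE)

lemma inner_risk_grad: "risk_grad f \<bullet> g = (\<integral>p. (dphi (snd p) (f \<bullet> Kx (fst p)) *\<^sub>R Kx (fst p)) \<bullet> g \<partial>\<rho>)"
  unfolding grad_err_def eval_h_def by (rule integral_inner_left[symmetric]) (rule integrable_dphi_Kx)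

lemma risk_descent:
  "risk (f + g) \<le> risk f + risk_grad f \<bullet> g + L / (1 + \<alpha>) * (norm g * \<kappa>) powr (1 + \<alpha>)"
proof -
  define C where "C = L / (1 + \<alpha>) * (norm g * \<kappa>) powr (1 + \<alpha>)"
  define lin where "lin = (\<lambda>p. \<phi> (snd p) (f \<bullet> Kx (fst p)) + (dphi (snd p) (f \<bullet> Kx (fst p)) *\<^sub>R Kx (fst p)) \<bullet> g)"
  have int_inner: "integrable \<rho> (\<lambda>p. (dphi (snd p) (f \<bullet> Kx (fst p)) *\<^sub>R Kx (fst p)) \<bullet> g)"
    by (intro integrable_inner_left integrable_dphi_Kx)
  have int_lin: "integrable \<rho> lin"
    unfolding lin_def by (intro Bochner_Integration.integrable_add integrable_loss int_inner)
  have "risk (f + g) \<le> (\<integral>p. lin p + C \<partial>\<rho>)"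
    unfolding risk_eq
  proof (rule integral_mono[OF integrable_loss])
    show "integrable \<rho> (\<lambda>p. lin p + C)"
      using int_lin by simp
    fix p assume p: "p \<in> space \<rho>"
    have "L / (1 + \<alpha>) * \<bar>g \<bullet> Kx (fst p)\<bar> powr (1 + \<alpha>) \<le> C"
      unfolding C_def using abs_inner_Kx_le[OF fst_in_X[OF p], of g] alpha L_pos
      by (intro mult_left_mono powr_mono2) auto
    then show "\<phi> (snd p) ((f + g) \<bullet> Kx (fst p)) \<le> lin p + C"
      using loss_descent[OF snd_in_Y[OF p], of "(f + g) \<bullet> Kx (fst p)" "f \<bullet> Kx (fst p)"]
      by (simp add: lin_def inner_add_left inner_commute)
  qed
  also have "\<dots> = integral\<^sup>L \<rho> lin + C"
    using int_lin by (simp add: prob_space)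
  also have "integral\<^sup>L \<rho> lin = risk f + risk_grad f \<bullet> g"
    unfolding lin_def risk_eq inner_risk_grad by (rule Bochner_Integration.integral_add[OF integrable_loss int_inner])
  finally show ?thesis
    by (simp add: C_def)
qed

lemma risk_grad_eq_0_if_minimizer:
  assumes min: "\<forall>f. risk fH \<le> risk f"
  shows "risk_grad fH = 0"
proof -
  define g where "g = - risk_grad fH"
  define C where "C = L / (1 + \<alpha>) * (norm g * \<kappa>) powr (1 + \<alpha>)"
  have "0 \<le> risk_grad fH \<bullet> g + h powr \<alpha> * C" if "0 < h" for h
  proof -
    have "(norm (h *\<^sub>R g) * \<kappa>) powr (1 + \<alpha>) = h powr (1 + \<alpha>) * (norm g * \<kappa>) powr (1 + \<alpha>)"
      using that kappa_nonneg by (simp add: powr_mult mult.assoc)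
    also have "h powr (1 + \<alpha>) = h * h powr \<alpha>"
      using that by (simp add: powr_add)
    finally have "risk (fH + h *\<^sub>R g) \<le> risk fH + risk_grad fH \<bullet> (h *\<^sub>R g) + L / (1 + \<alpha>) * (h * h powr \<alpha> * (norm g * \<kappa>) powr (1 + \<alpha>))"
      using risk_descent[of fH "h *\<^sub>R g"] by simp
    then have "risk (fH + h *\<^sub>R g) \<le> risk fH + h * (risk_grad fH \<bullet> g + h powr \<alpha> * C)"
      by (simp add: C_def algebra_simps)
    with min have "0 \<le> h * (risk_grad fH \<bullet> g + h powr \<alpha> * C)"
      by (smt (verit))
    with that show ?thesis
      by (simp add: zero_le_mult_iff)
  qed
  moreover have "((\<lambda>h. risk_grad fH \<bullet> g + h powr \<alpha> * C) \<longlongrightarrow> risk_grad fH \<bullet> g) (at_right 0)"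
    using tendsto_zero_powrI[of "\<lambda>h. h" "at_right 0" "\<lambda>_. \<alpha>" \<alpha>] alpha
    by (auto intro!: tendsto_eq_intros eventually_at_rightI[of 0 1])
  ultimately have "0 \<le> risk_grad fH \<bullet> g"
    by (intro tendsto_lowerbound[of _ _ "at_right 0"]) (auto intro: eventually_at_rightI[of 0 1])
  then have "risk_grad fH \<bullet> risk_grad fH = 0"
    using inner_ge_zero[of "risk_grad fH"] by (simp add: g_def)
  then show ?thesis
    by simp
qed

lemma expected_step_risk_le:
  assumes "0 \<le> \<eta>"
  shows "(\<integral>w. risk (f - (\<eta> * dphi (snd w) (f \<bullet> Kx (fst w))) *\<^sub>R Kx (fst w)) \<partial>\<rho>)
    \<le> risk f - \<eta> * (norm (risk_grad f))\<^sup>2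
      + L / (1 + \<alpha>) * \<eta> powr (1 + \<alpha>) * \<kappa> powr (2 * (1 + \<alpha>))
        * (\<integral>p. \<bar>dphi (snd p) (f \<bullet> Kx (fst p))\<bar> powr (1 + \<alpha>) \<partial>\<rho>)"
proof -
  define c where "c = (\<lambda>w. dphi (snd w) (f \<bullet> Kx (fst w)))"
  define C where "C = L / (1 + \<alpha>) * \<eta> powr (1 + \<alpha>) * \<kappa> powr (2 * (1 + \<alpha>))"
  define H where "H = (\<lambda>w. risk f - \<eta> * ((c w *\<^sub>R Kx (fst w)) \<bullet> risk_grad f) + C * \<bar>c w\<bar> powr (1 + \<alpha>))"
  have int_inner: "integrable \<rho> (\<lambda>w. (c w *\<^sub>R Kx (fst w)) \<bullet> risk_grad f)"
    unfolding c_def by (intro integrable_inner_left integrable_dphi_Kx)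
  have int_H: "integrable \<rho> H"
    unfolding H_def c_def using int_inner integrable_abs_dphi_powr by (simp add: c_def)
  have step_le_H: "risk (f - (\<eta> * c w) *\<^sub>R Kx (fst w)) \<le> H w" if "w \<in> space \<rho>" for w
  proof -
    have "norm ((\<eta> * c w) *\<^sub>R Kx (fst w)) * \<kappa> \<le> \<eta> * \<bar>c w\<bar> * \<kappa> * \<kappa>"
      using norm_Kx_le[OF fst_in_X[OF that]] kappa_nonneg \<open>0 \<le> \<eta>\<close>
      by (simp add: abs_mult mult_left_mono mult_right_mono)
    then have "(norm ((\<eta> * c w) *\<^sub>R Kx (fst w)) * \<kappa>) powr (1 + \<alpha>) \<le> (\<eta> * \<bar>c w\<bar> * \<kappa> * \<kappa>) powr (1 + \<alpha>)"
      using alpha kappa_nonneg by (intro powr_mono2) auto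
    also have "\<dots> = \<eta> powr (1 + \<alpha>) * \<bar>c w\<bar> powr (1 + \<alpha>) * \<kappa> powr (2 * (1 + \<alpha>))"
      using \<open>0 \<le> \<eta>\<close> kappa_nonneg by (simp add: powr_mult powr_add[symmetric])
    finally have "L / (1 + \<alpha>) * (norm ((\<eta> * c w) *\<^sub>R Kx (fst w)) * \<kappa>) powr (1 + \<alpha>) \<le> C * \<bar>c w\<bar> powr (1 + \<alpha>)"
      unfolding C_def using alpha L_pos by (simp add: mult_left_mono divide_right_mono mult_ac)
    then show ?thesis
      using risk_descent[of f "- (\<eta> * c w) *\<^sub>R Kx (fst w)"]
      by (simp add: H_def inner_commute)
  qed
  have "integral\<^sup>L \<rho> H = risk f - \<eta> * (risk_grad f \<bullet> risk_grad f) + C * (\<integral>w. \<bar>c w\<bar> powr (1 + \<alpha>) \<partial>\<rho>)"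
    using int_inner integrable_abs_dphi_powr
    by (simp add: H_def c_def inner_risk_grad[of f "risk_grad f"] prob_space)
  moreover have "(\<integral>w. risk (f - (\<eta> * c w) *\<^sub>R Kx (fst w)) \<partial>\<rho>) \<le> integral\<^sup>L \<rho> H"
    using step_le_H risk_nonneg by (intro integral_mono'[OF int_H]) (auto intro: order_trans)
  ultimately show ?thesis
    by (simp add: c_def C_def power2_norm_eq_inner)
qed

lemma dphi_moment_le_excess_risk:
  assumes min: "\<forall>f. risk fH \<le> risk f"
  shows "(\<integral>p. \<bar>dphi (snd p) (f \<bullet> Kx (fst p))\<bar> powr (1 + \<alpha>) \<partial>\<rho>)
    \<le> 2 powr \<alpha> * ((1 + \<alpha>) * L powr (1 / \<alpha>) * (risk f - risk fH) + (1 - \<alpha>)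
        + (\<integral>p. \<bar>dphi (snd p) (fH \<bullet> Kx (fst p))\<bar> powr (1 + \<alpha>) \<partial>\<rho>))"
proof -
  define c where "c = (\<lambda>p. dphi (snd p) (f \<bullet> Kx (fst p)))"
  define cH where "cH = (\<lambda>p. dphi (snd p) (fH \<bullet> Kx (fst p)))"
  define gap where "gap = (\<lambda>p. \<phi> (snd p) (f \<bullet> Kx (fst p)) - \<phi> (snd p) (fH \<bullet> Kx (fst p))
    - (cH p *\<^sub>R Kx (fst p)) \<bullet> (f - fH))"
  define B where "B = (\<lambda>p. 2 powr \<alpha> * ((1 + \<alpha>) * L powr (1 / \<alpha>) * gap p + (1 - \<alpha>) + \<bar>cH p\<bar> powr (1 + \<alpha>)))"
  have int_inner: "integrable \<rho> (\<lambda>p. (cH p *\<^sub>R Kx (fst p)) \<bullet> (f - fH))"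
    unfolding cH_def by (intro integrable_inner_left integrable_dphi_Kx)
  have int_gap: "integrable \<rho> gap"
    unfolding gap_def using integrable_loss int_inner by (intro Bochner_Integration.integrable_diff) auto
  \<comment> \<open>The Bregman gap of the loss integrates to the excess risk, since the gradient vanishes at fH.\<close>
  have "integral\<^sup>L \<rho> gap = risk f - risk fH - risk_grad fH \<bullet> (f - fH)"
    unfolding gap_def cH_def risk_eq inner_risk_grad
    using integrable_loss int_inner unfolding cH_def by simp
  then have int_gap_eq: "integral\<^sup>L \<rho> gap = risk f - risk fH"
    using risk_grad_eq_0_if_minimizer[OF min] by simp
  have "(\<integral>p. \<bar>c p\<bar> powr (1 + \<alpha>) \<partial>\<rho>) \<le> integral\<^sup>L \<rho> B"
  proof (rule integral_mono)
    show "integrable \<rho> (\<lambda>p. \<bar>c p\<bar> powr (1 + \<alpha>))" "integrable \<rho> B"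
      unfolding B_def c_def cH_def using int_gap integrable_abs_dphi_powr by auto
    show "\<bar>c p\<bar> powr (1 + \<alpha>) \<le> B p" if "p \<in> space \<rho>" for p
      using dphi_powr_bound[OF snd_in_Y[OF that], of "f \<bullet> Kx (fst p)" "fH \<bullet> Kx (fst p)"]
      by (simp add: B_def c_def cH_def gap_def inner_diff_left inner_commute algebra_simps)
  qed
  also have "integral\<^sup>L \<rho> B = 2 powr \<alpha> * ((1 + \<alpha>) * L powr (1 / \<alpha>) * (risk f - risk fH) + (1 - \<alpha>)
      + (\<integral>p. \<bar>cH p\<bar> powr (1 + \<alpha>) \<partial>\<rho>))"
    using int_gap integrable_abs_dphi_powr int_gap_eq by (simp add: B_def cH_def prob_space)
  finally show ?thesis
    by (simp add: c_def cH_def)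
qed

lemma expected_step_excess_risk_le:
  assumes min: "\<forall>f. risk fH \<le> risk f" and "0 \<le> \<eta>"
  shows "(\<integral>w. risk (f - (\<eta> * dphi (snd w) (f \<bullet> Kx (fst w))) *\<^sub>R Kx (fst w)) \<partial>\<rho>) - risk fH
    \<le> (1 + 2 powr \<alpha> * L powr (1 + 1 / \<alpha>) * \<kappa> powr (2 * (1 + \<alpha>)) * \<eta> powr (1 + \<alpha>)) * (risk f - risk fH)
      - \<eta> * (norm (risk_grad f))\<^sup>2
      + 2 powr \<alpha> * L * \<kappa> powr (2 * (1 + \<alpha>)) / (1 + \<alpha>)
        * ((1 - \<alpha>) + (\<integral>p. \<bar>dphi (snd p) (fH \<bullet> Kx (fst p))\<bar> powr (1 + \<alpha>) \<partial>\<rho>)) * \<eta> powr (1 + \<alpha>)"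
proof -
  define C where "C = L / (1 + \<alpha>) * \<eta> powr (1 + \<alpha>) * \<kappa> powr (2 * (1 + \<alpha>))"
  have "0 \<le> C"
    unfolding C_def using alpha L_pos by simp
  from mult_left_mono[OF dphi_moment_le_excess_risk[OF min, of f] this]
    expected_step_risk_le[OF \<open>0 \<le> \<eta>\<close>, of f]
  have "(\<integral>w. risk (f - (\<eta> * dphi (snd w) (f \<bullet> Kx (fst w))) *\<^sub>R Kx (fst w)) \<partial>\<rho>) - risk fH
    \<le> (risk f - risk fH) - \<eta> * (norm (risk_grad f))\<^sup>2 + C * (2 powr \<alpha> * ((1 + \<alpha>) * L powr (1 / \<alpha>) * (risk f - risk fH)
      + (1 - \<alpha>) + (\<integral>p. \<bar>dphi (snd p) (fH \<bullet> Kx (fst p))\<bar> powr (1 + \<alpha>) \<partial>\<rho>)))"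
    unfolding C_def by linarith
  moreover have "L powr (1 + 1 / \<alpha>) = L * L powr (1 / \<alpha>)"
    using L_pos by (simp add: powr_add)
  ultimately show ?thesis
    using alpha by (simp add: C_def field_simps)
qed

end

lemma ogd_cong: "\<forall>i<n. z i = z' i \<Longrightarrow> ogd \<eta> dphi Kx z n = ogd \<eta> dphi Kx z' n"
  by (induction n) auto

theorem mainTheorem18:
  fixes X :: "(real ^ 'd) set" and Y :: "real set"
    and \<rho> :: "((real ^ 'd) \<times> real) measure"
    and K :: "real ^ 'd \<Rightarrow> real ^ 'd \<Rightarrow> real"
    and Kx :: "real ^ 'd \<Rightarrow> 'h::{real_inner, banach, second_countable_topology}"
    and \<phi> dphi :: "real \<Rightarrow> real \<Rightarrow> real"
    and \<alpha> L :: real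
    and \<eta> :: "nat \<Rightarrow> real"
    and fH :: 'h
    and z :: "nat \<Rightarrow> (real ^ 'd) \<times> real"
    and t :: nat
  assumes prob: "prob_space \<rho>"
    and space_rho: "space \<rho> = X \<times> Y"
    and sets_rho: "sets \<rho> = sets (restrict_space borel (X \<times> Y))"
    \<comment> \<open>H_K realised as the Hilbert space 'h with feature map Kx (K_x), reproducing property
        f(x) = f \<bullet> Kx x, and H_K = closure of span of {K_x : x in X}\<close>
    and K_feat: "\<forall>x\<in>X. \<forall>x'\<in>X. K x x' = Kx x \<bullet> Kx x'"
    and K_dense: "closure (span (Kx ` X)) = UNIV"
    and K_cont: "continuous_on (X \<times> X) (\<lambda>p. K (fst p) (snd p))"
    and K_bdd: "bdd_above ((\<lambda>x. sqrt (K x x)) ` X)"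
    and phi_nonneg: "\<forall>y\<in>Y. \<forall>s. 0 \<le> \<phi> y s"
    and phi_meas: "(\<lambda>p. \<phi> (fst p) (snd p)) \<in> borel_measurable (restrict_space borel (Y \<times> UNIV))"
    and phi_convex: "\<forall>y\<in>Y. convex_on UNIV (\<phi> y)"
    and phi_deriv: "\<forall>y\<in>Y. \<forall>s. (\<phi> y has_real_derivative dphi y s) (at s)"
    and alpha: "0 < \<alpha>" "\<alpha> \<le> 1"
    and L_pos: "0 < L"
    and holder: "\<forall>y\<in>Y. \<forall>s s'. \<bar>dphi y s - dphi y s'\<bar> \<le> L * \<bar>s - s'\<bar> powr \<alpha>"
    and fH_min: "\<forall>f. gen_err \<rho> \<phi> Kx fH \<le> gen_err \<rho> \<phi> Kx f"
    and bdd0: "bdd_above ((\<lambda>y. \<phi> y 0) ` Y)"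
    and bddH: "bdd_above ((\<lambda>(x, y). \<phi> y (eval_h fH Kx x)) ` (X \<times> Y))"
    and eta_pos: "\<forall>i. 0 < \<eta> i"
    and z_in: "\<forall>i. z i \<in> X \<times> Y"
    and t_pos: "1 \<le> t"
  shows
    "(let \<kappa> = kappa X K;
          a = 2 powr \<alpha> * L powr (1 + 1 / \<alpha>) * \<kappa> powr (2 * (1 + \<alpha>));
          b = 2 powr \<alpha> * L * \<kappa> powr (2 * (1 + \<alpha>)) / (1 + \<alpha>)
              * ((1 - \<alpha>) + (\<integral>p. \<bar>dphi (snd p) (eval_h fH Kx (fst p))\<bar> powr (1 + \<alpha>) \<partial>\<rho>));
          ft = ogd \<eta> dphi Kx z t
      in (\<integral>w. gen_err \<rho> \<phi> Kx (ogd \<eta> dphi Kx (z(t := w)) (Suc t)) \<partial>\<rho>) - gen_err \<rho> \<phi> Kx fH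
         \<le> (1 + a * \<eta> t powr (1 + \<alpha>)) * (gen_err \<rho> \<phi> Kx ft - gen_err \<rho> \<phi> Kx fH)
           - \<eta> t * (norm (grad_err \<rho> dphi Kx ft))\<^sup>2 + b * \<eta> t powr (1 + \<alpha>))"
proof -
  interpret holder_loss_rkhs \<rho> X Y K Kx \<phi> dphi \<alpha> L
    by (intro holder_loss_rkhs.intro holder_loss_rkhs_axioms.intro prob) fact+
  define ft where "ft = ogd \<eta> dphi Kx z t"
  have "ogd \<eta> dphi Kx (z(t := w)) t = ft" for w
    unfolding ft_def by (rule ogd_cong) simp
  then have step: "ogd \<eta> dphi Kx (z(t := w)) (Suc t) = ft - (\<eta> t * dphi (snd w) (ft \<bullet> Kx (fst w))) *\<^sub>R Kx (fst w)" for w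
    using t_pos by (simp add: eval_h_def)
  show ?thesis
    using expected_step_excess_risk_le[OF fH_min less_imp_le[OF eta_pos[rule_format, of t]], of ft]
    unfolding Let_def step ft_def[symmetric] eval_h_def by (simp add: mult_ac)
qed

end
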